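(* Let $G$ be an $\alpha_i$-metric graph ($i\ge 0$ an integer) and $k$ a positive integer. Then for every vertex $v$ of $G$ with $e(v)\le rad(G)+k$, $d(v,C(G))\le k+i$.
   Context: All graphs are finite, connected, unweighted, undirected, simple; $d(u,v)$ is the shortest-path distance and $d(v,S)=\min_{s\in S}d(v,s)$. $I(u,v)=\{x: d(u,x)+d(x,v)=d(u,v)\}$. A graph is $\alpha_i$-metric if for all vertices $u,v,w,x$: whenever $v\in I(u,w)$, $w\in I(v,x)$ and $v,w$ are adjacent, then $d(u,x)\ge d(u,v)+d(v,x)-i$. $e(v)=\max_u d(u,v)$, $rad(G)=\min_v e(v)$, $C(G)=\{v:e(v)=rad(G)\}$. *)

theory Defs
  imports Main
begin

definition simple_graph :: "'a set \<Rightarrow> ('a \<Rightarrow> 'a \<Rightarrow> bool) \<Rightarrow> bool" where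
  "simple_graph V E \<longleftrightarrow> finite V \<and> V \<noteq> {} \<and>
     (\<forall>x y. E x y \<longrightarrow> x \<in> V \<and> y \<in> V) \<and>
     (\<forall>x y. E x y \<longrightarrow> E y x) \<and> (\<forall>x. \<not> E x x)"

definition walk :: "'a set \<Rightarrow> ('a \<Rightarrow> 'a \<Rightarrow> bool) \<Rightarrow> 'a list \<Rightarrow> bool" where
  "walk V E p \<longleftrightarrow> p \<noteq> [] \<and> set p \<subseteq> V \<and>
     (\<forall>j. Suc j < length p \<longrightarrow> E (p ! j) (p ! Suc j))"

definition connected_graph :: "'a set \<Rightarrow> ('a \<Rightarrow> 'a \<Rightarrow> bool) \<Rightarrow> bool" where
  "connected_graph V E \<longleftrightarrow>
     (\<forall>u\<in>V. \<forall>v\<in>V. \<exists>p. walk V E p \<and> hd p = u \<and> last p = v)"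

definition dist :: "'a set \<Rightarrow> ('a \<Rightarrow> 'a \<Rightarrow> bool) \<Rightarrow> 'a \<Rightarrow> 'a \<Rightarrow> nat" where
  "dist V E u v = (LEAST n. \<exists>p. walk V E p \<and> hd p = u \<and> last p = v \<and> length p = Suc n)"

definition interval :: "'a set \<Rightarrow> ('a \<Rightarrow> 'a \<Rightarrow> bool) \<Rightarrow> 'a \<Rightarrow> 'a \<Rightarrow> 'a set" where
  "interval V E u v = {x \<in> V. dist V E u x + dist V E x v = dist V E u v}"

definition alpha_metric :: "nat \<Rightarrow> 'a set \<Rightarrow> ('a \<Rightarrow> 'a \<Rightarrow> bool) \<Rightarrow> bool" where
  "alpha_metric i V E \<longleftrightarrow>
     (\<forall>u\<in>V. \<forall>v\<in>V. \<forall>w\<in>V. \<forall>x\<in>V.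
        v \<in> interval V E u w \<and> w \<in> interval V E v x \<and> E v w \<longrightarrow>
        int (dist V E u x) \<ge> int (dist V E u v) + int (dist V E v x) - int i)"

definition ecc :: "'a set \<Rightarrow> ('a \<Rightarrow> 'a \<Rightarrow> bool) \<Rightarrow> 'a \<Rightarrow> nat" where
  "ecc V E v = Max ((\<lambda>u. dist V E u v) ` V)"

definition rad :: "'a set \<Rightarrow> ('a \<Rightarrow> 'a \<Rightarrow> bool) \<Rightarrow> nat" where
  "rad V E = Min (ecc V E ` V)"

definition center :: "'a set \<Rightarrow> ('a \<Rightarrow> 'a \<Rightarrow> bool) \<Rightarrow> 'a set" where
  "center V E = {v \<in> V. ecc V E v = rad V E}"

definition dist_set :: "'a set \<Rightarrow> ('a \<Rightarrow> 'a \<Rightarrow> bool) \<Rightarrow> 'a \<Rightarrow> 'a set \<Rightarrow> nat" where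
  "dist_set V E v S = Min ((\<lambda>s. dist V E v s) ` S)"

end

theory Submission
  imports Defs
begin

text \<open>Let c be a central vertex nearest to v and w the neighbour of c on a shortest
  path from v to c, so d(v,w) = d(v,c) - 1 and w is not central. A vertex x farthest
  from w has d(w,x) = rad + 1 and d(c,x) = rad, hence c lies in I(w,x), and the
  alpha_i condition for v, w, c, x gives e(v) \<ge> d(v,x) \<ge> d(v,c) + rad - i.\<close>

lemma walk_Cons:
  "walk V E (a # q) \<longleftrightarrow> a \<in> V \<and> (q = [] \<or> E a (hd q) \<and> walk V E q)"
  by (cases q) (auto simp: walk_def nth_Cons less_Suc_eq_0_disj split: nat.splits)

lemma walk_length_Suc: "walk V E p \<Longrightarrow> length p = Suc (length p - 1)"
  by (cases p) (auto simp: walk_def)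

lemma walk_take: "walk V E p \<Longrightarrow> 0 < n \<Longrightarrow> walk V E (take n p)"
  by (auto simp: walk_def dest: in_set_takeD)

lemma walk_append:
  "walk V E p \<Longrightarrow> walk V E q \<Longrightarrow> last p = hd q \<Longrightarrow> walk V E (p @ tl q)"
proof (induction p)
  case Nil
  then show ?case by (simp add: walk_def)
next
  case (Cons a p)
  show ?case
  proof (cases "p = []")
    case True
    then have "a # tl q = q" using Cons.prems(2,3) by (cases q) (simp_all add: walk_def)
    then show ?thesis using True Cons.prems(2) by simp
  next
    case False
    then have "a \<in> V" "E a (hd p)" "walk V E p" using Cons.prems(1) by (simp_all add: walk_Cons)
    moreover have "walk V E (p @ tl q)" using Cons.IH \<open>walk V E p\<close> Cons.prems(2,3) False by simp
    ultimately show ?thesis using False by (simp add: walk_Cons)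
  qed
qed

lemma walk_rev:
  assumes "\<forall>x y. E x y \<longrightarrow> E y x" and "walk V E p"
  shows "walk V E (rev p)"
proof -
  have "E (rev p ! j) (rev p ! Suc j)" if j: "Suc j < length p" for j
  proof -
    obtain m where m: "length p = Suc (Suc (j + m))"
      using less_imp_Suc_add[OF j] by auto
    have "E (p ! m) (p ! Suc m)" using assms(2) m unfolding walk_def by simp
    then show ?thesis using assms(1) m by (simp add: rev_nth)
  qed
  then show ?thesis using assms(2) by (simp add: walk_def)
qed

lemma dist_le_walk:
  assumes "walk V E p" "hd p = u" "last p = v"
  shows "dist V E u v \<le> length p - 1"
  unfolding dist_def using assms walk_length_Suc[OF assms(1)] by (metis (mono_tags, lifting) Least_le)

lemma dist_set_attained:
  assumes "finite S" "S \<noteq> {}"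
  obtains c where "c \<in> S" "dist_set V E v S = dist V E v c"
    "\<And>s. s \<in> S \<Longrightarrow> dist V E v c \<le> dist V E v s"
proof -
  have "dist_set V E v S \<in> (\<lambda>s. dist V E v s) ` S"
    unfolding dist_set_def by (rule Min_in) (simp_all add: assms)
  then obtain c where c: "c \<in> S" "dist_set V E v S = dist V E v c" by blast
  have "dist_set V E v S \<le> dist V E v s" if "s \<in> S" for s
    unfolding dist_set_def by (rule Min_le) (simp_all add: assms that)
  with c show thesis by (intro that) simp_all
qed

locale connected_simple_graph =
  fixes V :: "'a set" and E :: "'a \<Rightarrow> 'a \<Rightarrow> bool"
  assumes simple: "simple_graph V E" and connected: "connected_graph V E"
begin

lemma finite_vertices: "finite V" and vertices_nonempty: "V \<noteq> {}"
  and edge_sym: "E x y \<Longrightarrow> E y x" and edge_irrefl: "\<not> E x x"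
  and edge_in_vertices: "E x y \<Longrightarrow> x \<in> V \<and> y \<in> V"
  using simple by (auto simp: simple_graph_def)

lemma shortest_walk_exists:
  assumes "u \<in> V" "v \<in> V"
  obtains p where "walk V E p" "hd p = u" "last p = v" "length p = Suc (dist V E u v)"
proof -
  obtain p where "walk V E p" "hd p = u" "last p = v"
    using connected assms unfolding connected_graph_def by blast
  then have "\<exists>n p. walk V E p \<and> hd p = u \<and> last p = v \<and> length p = Suc n"
    using walk_length_Suc by blast
  from LeastI_ex[OF this] show thesis using that unfolding dist_def by blast
qed

lemma dist_sym:
  assumes "u \<in> V" "v \<in> V"
  shows "dist V E u v = dist V E v u"
proof -
  have "dist V E a b \<le> dist V E b a" if "a \<in> V" "b \<in> V" for a b
  proof -
    from that obtain p
      where p: "walk V E p" "hd p = b" "last p = a" "length p = Suc (dist V E b a)"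
      using shortest_walk_exists by metis
    have "walk V E (rev p)" using walk_rev edge_sym p(1) by blast
    moreover have "hd (rev p) = a" "last (rev p) = b"
      using p by (auto simp: walk_def hd_rev last_rev)
    ultimately show ?thesis using dist_le_walk p(4) by fastforce
  qed
  then show ?thesis using assms by (simp add: le_antisym)
qed

lemma dist_triangle:
  assumes "u \<in> V" "w \<in> V" "x \<in> V"
  shows "dist V E u x \<le> dist V E u w + dist V E w x"
proof -
  obtain p where p: "walk V E p" "hd p = u" "last p = w" "length p = Suc (dist V E u w)"
    using shortest_walk_exists[OF assms(1,2)] .
  obtain q where q: "walk V E q" "hd q = w" "last q = x" "length q = Suc (dist V E w x)"
    using shortest_walk_exists[OF assms(2,3)] .
  have "walk V E (p @ tl q)" using walk_append p q by metis
  moreover have "hd (p @ tl q) = u" using p(2,4) by (cases p) auto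
  moreover have "last (p @ tl q) = x" using p(3) q(2-4) by (cases q) (auto simp: last_append)
  ultimately have "dist V E u x \<le> length (p @ tl q) - 1" using dist_le_walk by metis
  then show ?thesis using p q by simp
qed

lemma dist_edge:
  assumes "E a b"
  shows "dist V E a b = 1"
proof -
  have "walk V E [a, b]" using assms edge_in_vertices by (auto simp: walk_Cons)
  then have "dist V E a b \<le> 1" using dist_le_walk[of V E "[a, b]"] by simp
  moreover have "dist V E a b \<noteq> 0"
  proof
    assume "dist V E a b = 0"
    moreover obtain p where "hd p = a" "last p = b" "length p = Suc (dist V E a b)"
      using shortest_walk_exists assms edge_in_vertices by blast
    ultimately show False using assms edge_irrefl by (cases p) auto
  qed
  ultimately show ?thesis by simp
qed

lemma last_edge_of_shortest_walk:
  assumes "u \<in> V" "v \<in> V" "dist V E u v > 0"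
  obtains w where "w \<in> V" "E w v" "dist V E u w = dist V E u v - 1"
proof -
  define d where "d = dist V E u v"
  have "0 < d" using assms(3) d_def by simp
  obtain p where p: "walk V E p" "hd p = u" "last p = v" "length p = Suc d"
    using shortest_walk_exists[OF assms(1,2)] unfolding d_def .
  define w where "w = p ! (d - 1)"
  have "Suc (d - 1) < length p" using p(4) \<open>0 < d\<close> by simp
  then have "E w (p ! Suc (d - 1))" using p(1) unfolding walk_def w_def by blast
  then have "E w (p ! d)" using \<open>0 < d\<close> by simp
  moreover have "p ! d = v" using p(3,4) last_conv_nth[of p] by fastforce
  ultimately have "E w v" by simp
  then have "w \<in> V" using edge_in_vertices by blast
  have len: "length (take d p) = d" using p(4) by simp
  then have "take d p \<noteq> []" using \<open>0 < d\<close> by (metis length_0_conv less_irrefl)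
  have "walk V E (take d p)" using walk_take[OF p(1) \<open>0 < d\<close>] .
  moreover have "hd (take d p) = u" using p(2) \<open>0 < d\<close> by simp
  moreover have "last (take d p) = w"
    using \<open>take d p \<noteq> []\<close> len \<open>0 < d\<close> unfolding w_def by (simp add: last_conv_nth)
  ultimately have "dist V E u w \<le> length (take d p) - 1" by (rule dist_le_walk)
  then have "dist V E u w \<le> d - 1" using len by simp
  moreover have "d \<le> dist V E u w + 1"
    using dist_triangle[OF assms(1) \<open>w \<in> V\<close> assms(2)] dist_edge[OF \<open>E w v\<close>]
    unfolding d_def by linarith
  ultimately show thesis using that \<open>w \<in> V\<close> \<open>E w v\<close> d_def by simp
qed

lemma dist_le_ecc: "u \<in> V \<Longrightarrow> dist V E u v \<le> ecc V E v"
  unfolding ecc_def using finite_vertices by simp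

lemma ecc_attained: obtains u where "u \<in> V" "dist V E u v = ecc V E v"
proof -
  have "ecc V E v \<in> (\<lambda>u. dist V E u v) ` V"
    unfolding ecc_def by (rule Max_in) (simp_all add: finite_vertices vertices_nonempty)
  then show thesis using that by auto
qed

lemma rad_le_ecc: "v \<in> V \<Longrightarrow> rad V E \<le> ecc V E v"
  unfolding rad_def using finite_vertices by simp

lemma center_nonempty: "center V E \<noteq> {}"
proof -
  have "rad V E \<in> ecc V E ` V"
    unfolding rad_def by (rule Min_in) (simp_all add: finite_vertices vertices_nonempty)
  then show ?thesis unfolding center_def by auto
qed

lemma finite_center: "finite (center V E)"
  using finite_vertices unfolding center_def by simp

lemma center_between_neighbour_and_far_vertex:
  assumes "c \<in> center V E" "E w c" "w \<notin> center V E"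
  obtains x where "x \<in> V" "dist V E w x = rad V E + 1" "c \<in> interval V E w x"
proof -
  have wV: "w \<in> V" and cV: "c \<in> V" using assms(2) edge_in_vertices by auto
  obtain x where xV: "x \<in> V" and "dist V E x w = ecc V E w" using ecc_attained .
  moreover have "ecc V E w \<ge> rad V E + 1"
    using assms(3) rad_le_ecc[OF wV] wV unfolding center_def by auto
  moreover have "dist V E c x \<le> rad V E"
    using dist_le_ecc[OF xV, of c] assms(1) dist_sym[OF cV xV] unfolding center_def by simp
  moreover have "dist V E w x \<le> 1 + dist V E c x"
    using dist_triangle[OF wV cV xV] dist_edge[OF assms(2)] by simp
  ultimately have far: "dist V E w x = rad V E + 1" "dist V E c x = rad V E"
    using dist_sym[OF wV xV] by linarith+
  then have "c \<in> interval V E w x" using cV dist_edge[OF assms(2)] by (simp add: interval_def)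
  with xV far(1) show thesis by (rule that)
qed

lemma dist_set_center_le_ecc:
  assumes "alpha_metric i V E" "v \<in> V"
  shows "dist_set V E v (center V E) + rad V E \<le> ecc V E v + i"
proof -
  obtain c where c: "c \<in> center V E" and dc: "dist_set V E v (center V E) = dist V E v c"
    and nearest: "\<And>s. s \<in> center V E \<Longrightarrow> dist V E v c \<le> dist V E v s"
    using dist_set_attained[OF finite_center center_nonempty] by metis
  have cV: "c \<in> V" using c unfolding center_def by simp
  show ?thesis
  proof (cases "dist V E v c = 0")
    case True
    then show ?thesis using dc rad_le_ecc[OF assms(2)] by simp
  next
    case False
    obtain w where wV: "w \<in> V" and "E w c" and dvw: "dist V E v w = dist V E v c - 1"
      using last_edge_of_shortest_walk[OF assms(2) cV] False by blast
    have "w \<notin> center V E" using nearest dvw False by fastforce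
    then obtain x where xV: "x \<in> V" and dwx: "dist V E w x = rad V E + 1"
      and "c \<in> interval V E w x"
      using center_between_neighbour_and_far_vertex c \<open>E w c\<close> by blast
    moreover have "w \<in> interval V E v c"
      using wV dvw False dist_edge[OF \<open>E w c\<close>] by (simp add: interval_def)
    ultimately have "int (dist V E v x) \<ge> int (dist V E v w) + int (dist V E w x) - int i"
      using assms unfolding alpha_metric_def using wV cV \<open>E w c\<close> by blast
    moreover have "dist V E v x \<le> ecc V E v"
      using dist_le_ecc[OF xV, of v] dist_sym[OF assms(2) xV] by simp
    ultimately show ?thesis using dvw dwx dc False by linarith
  qed
qed

end

theorem lemma8:
  fixes V :: "'a set" and E :: "'a \<Rightarrow> 'a \<Rightarrow> bool" and i k :: nat
  assumes "simple_graph V E" and "connected_graph V E"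
    and "alpha_metric i V E"
    and "k > 0"
    and "v \<in> V" and "ecc V E v \<le> rad V E + k"
  shows "dist_set V E v (center V E) \<le> k + i"
proof -
  interpret connected_simple_graph V E using assms(1,2) by unfold_locales
  show ?thesis using dist_set_center_le_ecc[OF assms(3,5)] assms(6) by linarith
qed

end
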